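(* Let $M\in\mathrm{M}_n(\mathbb{K})$. If there exists a nonzero $M$-code $\mathcal{C}\subsetneq\mathbb{L}^n$ with parameters $[n,k]$ that is MRD, i.e. $M_1(\mathcal{C})=n-k+1$, then the minimal polynomial of $M$ is $\mu_M=\pi^\ell$ for some integer $\ell\ge1$ and some monic polynomial $\pi\in\mathbb{K}[x]$ irreducible over $\mathbb{K}$.
   Context: Let $\mathbb{L}/\mathbb{K}$ be a field extension of finite degree $m$, and $n\ge 1$ an integer with $m\ge n$ (standing assumption). Vectors are row vectors. For $c=(c_1,\dots,c_n)\in\mathbb{L}^n$, $\mathrm{Rsupp}(c)\subseteq\mathbb{K}^n$ is the $\mathbb{K}$-row space of the $m\times n$ matrix over $\mathbb{K}$ whose $j$-th column is the coordinate vector of $c_j$ in a fixed $\mathbb{K}$-basis of $\mathbb{L}$, and $\mathrm{wt}_R(c)=\dim_{\mathbb{K}}\mathrm{Rsupp}(c)$; for an $\mathbb{L}$-subspace $\mathcal{D}$, $\mathrm{wt}_R(\mathcal{D})$ is the $\mathbb{K}$-dimension of the span of all $\mathrm{Rsupp}(d)$, $d\in\mathcal{D}$. For a linear $[n,k]$ code $\mathcal{C}$ and $1\le r\le k$, $M_r(\mathcal{C})=\min\{\mathrm{wt}_R(\mathcal{D}):\mathcal{D}\subseteq\mathcal{C},\dim_{\mathbb{L}}\mathcal{D}=r\}$. For $M\in\mathrm{M}_n(\mathbb{K})$, a linear code $\mathcal{C}\subseteq\mathbb{L}^n$ is an $M$-code if $cM^t\in\mathcal{C}$ for all $c\in\mathcal{C}$.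 *)

theory Defs
  imports "HOL-Analysis.Analysis" "HOL-Computational_Algebra.Computational_Algebra"
begin

(* L/K is modelled by two field types 'K, 'L and a ring embedding emb : 'K => 'L. *)
definition field_emb :: "('K::field \<Rightarrow> 'L::field) \<Rightarrow> bool" where
  "field_emb emb \<longleftrightarrow> emb 1 = 1 \<and> (\<forall>x y. emb (x + y) = emb x + emb y) \<and>
     (\<forall>x y. emb (x * y) = emb x * emb y)"

(* b : 'm => 'L is a K-basis of L (so [L:K] = CARD('m)) *)
definition is_K_basis :: "('K::field \<Rightarrow> 'L::field) \<Rightarrow> ('m::finite \<Rightarrow> 'L) \<Rightarrow> bool" where
  "is_K_basis emb b \<longleftrightarrow> (\<forall>l. \<exists>!a::'K^'m. l = (\<Sum>i\<in>UNIV. emb (a $ i) * b i))"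

definition coord :: "('K::field \<Rightarrow> 'L::field) \<Rightarrow> ('m::finite \<Rightarrow> 'L) \<Rightarrow> 'L \<Rightarrow> 'K^'m" where
  "coord emb b l = (THE a. l = (\<Sum>i\<in>UNIV. emb (a $ i) * b i))"

definition coord_matrix :: "('K::field \<Rightarrow> 'L::field) \<Rightarrow> ('m::finite \<Rightarrow> 'L) \<Rightarrow> 'L^'n \<Rightarrow> 'K^'n^'m" where
  "coord_matrix emb b c = (\<chi> i j. coord emb b (c $ j) $ i)"

definition Rsupp :: "('K::field \<Rightarrow> 'L::field) \<Rightarrow> ('m::finite \<Rightarrow> 'L) \<Rightarrow> 'L^'n \<Rightarrow> ('K^'n) set" where
  "Rsupp emb b c = vec.span (range (\<lambda>i. row i (coord_matrix emb b c)))"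

definition wtR :: "('K::field \<Rightarrow> 'L::field) \<Rightarrow> ('m::finite \<Rightarrow> 'L) \<Rightarrow> 'L^'n \<Rightarrow> nat" where
  "wtR emb b c = vec.dim (Rsupp emb b c)"

definition wtR_space :: "('K::field \<Rightarrow> 'L::field) \<Rightarrow> ('m::finite \<Rightarrow> 'L) \<Rightarrow> ('L^'n) set \<Rightarrow> nat" where
  "wtR_space emb b D = vec.dim (vec.span (\<Union>d\<in>D. Rsupp emb b d))"

definition gen_rank_weight :: "('K::field \<Rightarrow> 'L::field) \<Rightarrow> ('m::finite \<Rightarrow> 'L) \<Rightarrow> nat \<Rightarrow> ('L^'n) set \<Rightarrow> nat" where
  "gen_rank_weight emb b r C =
     Min {wtR_space emb b D | D. vec.subspace D \<and> D \<subseteq> C \<and> vec.dim D = r}"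

(* C is an M-code: c M^t \<in> C for all c \<in> C, i.e. M c^t (M mapped into L) *)
definition is_M_code :: "('K::field \<Rightarrow> 'L::field) \<Rightarrow> 'K^'n^'n \<Rightarrow> ('L^'n) set \<Rightarrow> bool" where
  "is_M_code emb M C \<longleftrightarrow> vec.subspace C \<and> (\<forall>c\<in>C. map_matrix emb M *v c \<in> C)"

primrec mat_pow :: "'a::semiring_1^'n^'n \<Rightarrow> nat \<Rightarrow> 'a^'n^'n" where
  "mat_pow M 0 = mat 1"
| "mat_pow M (Suc k) = M ** mat_pow M k"

definition poly_mat :: "'a::comm_ring_1 poly \<Rightarrow> 'a^'n^'n \<Rightarrow> 'a^'n^'n" where
  "poly_mat p M = (\<Sum>i\<le>degree p. mat (coeff p i) ** mat_pow M i)"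

definition min_poly_mat :: "'a::field^'n^'n \<Rightarrow> 'a poly" where
  "min_poly_mat M = (THE p. lead_coeff p = 1 \<and> poly_mat p M = 0 \<and>
       (\<forall>q. q \<noteq> 0 \<and> poly_mat q M = 0 \<longrightarrow> degree p \<le> degree q))"

end

theory Submission
  imports Defs
begin

(*
  If the minimal polynomial of M is not a power of an irreducible polynomial, it factors as
  f g with f, g of positive degree and s f + t g = 1.  Then K^n = V1 + V2 is a direct sum with
  V1 = ker f(M) and V2 = ker g(M) both nonzero, the idempotents (t g)(M) and (s f)(M) being the
  projections.  An M-code is stable under these projections, so C = C1 + C2 (direct) with
  Ci = C \<inter> (Vi \<otimes> L), where Vi \<otimes> L consists of the vectors whose rank support lies in Vi.
  Inside Vi \<otimes> L a dimension count gives a Singleton bound: a nonzero subcode of dimension ki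
  contains a nonzero word of rank weight at most dim Vi - ki + 1.  For an MRD code,
  d = n - k + 1, and adding the two bounds forces k = n if both Ci are nonzero, while
  C2 = 0 gives d \<le> dim V1 - k + 1 < d.
*)

section \<open>Matrix polynomials\<close>

lemma matrix_mat_mult_commute: "A ** mat c = mat c ** (A::'a::comm_semiring_1^'n^'n)"
  by (simp add: matrix_matrix_mult_def mat_def vec_eq_iff if_distrib[of "\<lambda>x. _ * x"]
      if_distrib[of "\<lambda>x. x * _"] sum.delta' cong: if_cong) (simp add: mult.commute)

lemma mat_matrix_mult_left_commute:
  "mat c ** ((A::'a::comm_semiring_1^'n^'n) ** B) = A ** (mat c ** B)"
  by (metis matrix_mul_assoc matrix_mat_mult_commute)

lemma mat_mult_mat: "mat a ** mat c = (mat (a * c) :: 'a::comm_semiring_1^'n^'n)"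
  by (simp add: matrix_matrix_mult_def mat_def vec_eq_iff if_distrib[of "\<lambda>x. _ * x"]
      sum.delta' cong: if_cong)

lemma mat_add_mat: "mat a + mat c = (mat (a + c) :: 'a::semiring_1^'n^'n)"
  by (simp add: mat_def vec_eq_iff)

lemma matrix_add_rdistrib: "((A::'a::semiring_1^'n^'m) + B) ** C = A ** C + B ** C"
  by (vector matrix_matrix_mult_def sum.distrib[symmetric] field_simps)

lemma matrix_mult_sum_right: "(A::'a::semiring_1^'n^'m) ** sum f S = (\<Sum>i\<in>S. A ** f i)"
  by (induction S rule: infinite_finite_induct) (auto simp: matrix_add_ldistrib)

lemma mat_matrix_vector_mult: "mat a *v x = a *s (x::'a::semiring_1^'n)"
  by (simp add: vec_eq_iff matrix_vector_mult_def mat_def if_distrib[of "\<lambda>x. x * _"]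
      sum.delta cong: if_cong)

lemma poly_mat_eq_sum_lessThan:
  assumes "degree p < N"
  shows "poly_mat p M = (\<Sum>i<N. mat (coeff p i) ** mat_pow M i)"
  unfolding poly_mat_def
  by (rule sum.mono_neutral_left) (use assms in \<open>auto simp: coeff_eq_0\<close>)

lemma poly_mat_0 [simp]: "poly_mat 0 M = 0"
  by (simp add: poly_mat_def)

lemma poly_mat_1 [simp]: "poly_mat 1 M = mat 1"
  by (simp add: poly_mat_def)

lemma poly_mat_pCons: "poly_mat (pCons a p) M = mat a + M ** poly_mat p M"
proof -
  let ?N = "Suc (degree p)"
  have "poly_mat (pCons a p) M = (\<Sum>i<Suc ?N. mat (coeff (pCons a p) i) ** mat_pow M i)"
    by (rule poly_mat_eq_sum_lessThan) (simp add: degree_pCons_le le_imp_less_Suc)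
  also have "\<dots> = mat a + (\<Sum>i<?N. mat (coeff p i) ** (M ** mat_pow M i))"
    by (subst sum.lessThan_Suc_shift) simp
  also have "(\<Sum>i<?N. mat (coeff p i) ** (M ** mat_pow M i)) =
      M ** (\<Sum>i<?N. mat (coeff p i) ** mat_pow M i)"
    by (simp only: matrix_mult_sum_right mat_matrix_mult_left_commute)
  also have "(\<Sum>i<?N. mat (coeff p i) ** mat_pow M i) = poly_mat p M"
    by (rule poly_mat_eq_sum_lessThan[symmetric]) simp
  finally show ?thesis .
qed

lemma poly_mat_add: "poly_mat (p + q) M = poly_mat p M + poly_mat q M"
  by (induction p q rule: poly_induct2)
    (simp_all add: poly_mat_pCons matrix_add_ldistrib mat_add_mat[symmetric] algebra_simps)

lemma poly_mat_smult: "poly_mat (smult a p) M = mat a ** poly_mat p M"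
  by (induction p) (simp_all add: poly_mat_pCons matrix_add_ldistrib mat_mult_mat
      mat_matrix_mult_left_commute)

lemma poly_mat_mult: "poly_mat (p * q) M = poly_mat p M ** poly_mat q M"
  by (induction p) (simp_all add: poly_mat_add poly_mat_smult poly_mat_pCons
      matrix_add_rdistrib matrix_mul_assoc)

lemma poly_mat_diff: "poly_mat (p - q) M = poly_mat p M - poly_mat q M"
  using poly_mat_add[of "p - q" q M] by (simp add: eq_diff_eq)

lemma poly_mat_monom: "poly_mat (monom c j) M = mat c ** mat_pow M j"
  by (induction j) (simp_all add: monom_0 monom_Suc poly_mat_pCons mat_matrix_mult_left_commute)

lemma poly_mat_sum: "poly_mat (sum f S) M = (\<Sum>i\<in>S. poly_mat (f i) M)"
  by (induction S rule: infinite_finite_induct) (auto simp: poly_mat_add)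

section \<open>Existence of the minimal polynomial\<close>

definition vectorize :: "'a^'n^'m \<Rightarrow> 'a^('m \<times> 'n)" where
  "vectorize A = (\<chi> ij. A $ fst ij $ snd ij)"

lemma vectorize_0 [simp]: "vectorize 0 = 0"
  by (simp add: vectorize_def vec_eq_iff)

lemma vectorize_sum: "vectorize (sum f S) = (\<Sum>i\<in>S. vectorize (f i))"
  by (simp add: vectorize_def vec_eq_iff sum_component)

lemma vectorize_mat_mult: "vectorize (mat c ** (A::'a::semiring_1^'n^'n)) = c *s vectorize A"
  by (simp add: vectorize_def vec_eq_iff matrix_matrix_mult_def mat_def
      if_distrib[of "\<lambda>x. x * _"] sum.delta cong: if_cong)

lemma vectorize_eq_iff: "vectorize A = vectorize B \<longleftrightarrow> A = B"
  by (auto simp: vectorize_def vec_eq_iff)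

lemma exists_nontrivial_vanishing_combination:
  fixes v :: "'i \<Rightarrow> 'a::field^'n"
  assumes "finite I" and "CARD('n) < card I"
  obtains u where "\<exists>i\<in>I. u i \<noteq> 0" and "(\<Sum>i\<in>I. u i *s v i) = 0"
proof (cases "inj_on v I")
  case True
  have "vec.dim (v ` I) < card (v ` I)"
    using assms(2) dim_subset_UNIV_cart_gen[of "v ` I"] True by (simp add: card_image)
  then have "vec.dependent (v ` I)"
    by (rule vec.dependent_biggerset_general)
  then obtain w where "\<exists>x\<in>v ` I. w x \<noteq> 0" and "(\<Sum>x\<in>v ` I. w x *s x) = 0"
    using vec.dependent_finite[of "v ` I"] assms(1) by auto
  then show ?thesis
    using that[of "w \<circ> v"] by (simp add: sum.reindex[OF True])
next
  case False
  then obtain i j where ij: "i \<in> I" "j \<in> I" "i \<noteq> j" "v i = v j"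
    by (auto simp: inj_on_def)
  define u :: "'i \<Rightarrow> 'a" where "u k = (if k = i then 1 else if k = j then -1 else 0)" for k
  have "(\<Sum>k\<in>I. u k *s v k) = (\<Sum>k\<in>{i, j}. u k *s v k)"
    using ij assms(1) by (intro sum.mono_neutral_right) (auto simp: u_def)
  also have "\<dots> = 0"
    using ij by (simp add: u_def)
  finally show ?thesis
    using that[of u] ij(1) by (metis u_def one_neq_zero)
qed

lemma exists_annihilating_poly: "\<exists>q. q \<noteq> 0 \<and> poly_mat q (M::'a::field^'n^'n) = 0"
proof -
  define N where "N = CARD('n \<times> 'n)"
  obtain u where u: "\<exists>i\<in>{..N}. u i \<noteq> 0"
    and comb: "(\<Sum>i\<le>N. u i *s vectorize (mat_pow M i)) = 0"
    using exists_nontrivial_vanishing_combination[of "{..N}" "\<lambda>i. vectorize (mat_pow M i)"]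
    by (auto simp: N_def)
  define q where "q = (\<Sum>i\<le>N. monom (u i) i)"
  have "vectorize (poly_mat q M) = vectorize 0"
    using comb by (simp add: q_def poly_mat_sum poly_mat_monom vectorize_sum vectorize_mat_mult)
  then have "poly_mat q M = 0"
    by (simp only: vectorize_eq_iff)
  moreover from u obtain i where "i \<le> N" "u i \<noteq> 0"
    by auto
  then have "coeff q i \<noteq> 0"
    by (simp add: q_def coeff_sum coeff_monom)
  ultimately show ?thesis
    by (metis coeff_0)
qed

lemma
  fixes M :: "'a::field^'n^'n"
  shows monic_min_poly_mat: "lead_coeff (min_poly_mat M) = 1"
    and poly_mat_min_poly_mat: "poly_mat (min_poly_mat M) M = 0"
    and degree_min_poly_mat_le:
      "q \<noteq> 0 \<Longrightarrow> poly_mat q M = 0 \<Longrightarrow> degree (min_poly_mat M) \<le> degree q"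
proof -
  let ?annih = "\<lambda>q. q \<noteq> 0 \<and> poly_mat q M = 0"
  let ?P = "\<lambda>p. lead_coeff p = 1 \<and> poly_mat p M = 0 \<and> (\<forall>q. ?annih q \<longrightarrow> degree p \<le> degree q)"
  obtain q0 where q0: "?annih q0" and q0_min: "\<And>q. ?annih q \<Longrightarrow> degree q0 \<le> degree q"
    using exists_annihilating_poly[of M] ex_has_least_nat[of ?annih _ degree] by metis
  define p where "p = smult (inverse (lead_coeff q0)) q0"
  have p: "?P p"
    using q0 q0_min by (simp add: p_def poly_mat_smult)
  have "p' = p" if p': "?P p'" for p'
  proof (rule ccontr)
    assume "p' \<noteq> p"
    have "degree p' = degree p"
      using p p' by (metis le_antisym leading_coeff_0_iff zero_neq_one)
    have "?annih (p - p')"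
      using p p' \<open>p' \<noteq> p\<close> by (simp add: poly_mat_diff)
    moreover have "degree (p - p') < degree p"
    proof (rule degree_lessI)
      show "p - p' \<noteq> 0 \<or> 0 < degree p"
        using \<open>p' \<noteq> p\<close> by simp
      show "\<forall>k\<ge>degree p. coeff (p - p') k = 0"
        using p p' \<open>degree p' = degree p\<close> by (auto simp: le_less coeff_eq_0)
    qed
    ultimately show False
      using p by (meson leD)
  qed
  then have "min_poly_mat M = p"
    unfolding min_poly_mat_def using p by (rule the_equality[rotated])
  then show "lead_coeff (min_poly_mat M) = 1" "poly_mat (min_poly_mat M) M = 0"
    "q \<noteq> 0 \<Longrightarrow> poly_mat q M = 0 \<Longrightarrow> degree (min_poly_mat M) \<le> degree q"
    using p by auto
qed

lemma degree_min_poly_mat_pos: "0 < degree (min_poly_mat (M::'a::field^'n^'n))"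
proof (rule ccontr)
  assume "\<not> 0 < degree (min_poly_mat M)"
  then have "min_poly_mat M = 1"
    using degree_0_id[of "min_poly_mat M"] monic_min_poly_mat[of M] by (simp add: one_pCons)
  then have "(mat 1 :: 'a^'n^'n) $ i $ i = 0" for i
    using poly_mat_min_poly_mat[of M] by simp
  then show False
    by (simp add: mat_def)
qed

lemma min_poly_mat_factor_kernel_nontrivial:
  fixes M :: "'a::field^'n^'n"
  assumes fg: "min_poly_mat M = f * g" and "0 < degree f"
  shows "{x. poly_mat f M *v x = 0} \<noteq> {0}"
proof
  assume ker: "{x. poly_mat f M *v x = 0} = {0}"
  have "poly_mat f M ** poly_mat g M = 0"
    using poly_mat_min_poly_mat[of M] by (simp add: fg poly_mat_mult)
  then have "poly_mat g M *v x \<in> {x. poly_mat f M *v x = 0}" for x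
    by (simp add: matrix_vector_mul_assoc)
  then have "poly_mat g M = 0"
    unfolding ker by (simp add: matrix_eq)
  moreover have "f \<noteq> 0" "g \<noteq> 0"
    using fg monic_min_poly_mat[of M] by auto
  ultimately have "degree (min_poly_mat M) \<le> degree g"
    using degree_min_poly_mat_le by blast
  then show False
    using fg \<open>0 < degree f\<close> \<open>f \<noteq> 0\<close> \<open>g \<noteq> 0\<close> by (simp add: degree_mult_eq)
qed

section \<open>Polynomials that are not prime powers\<close>

lemma poly_exists_monic_irreducible_factor:
  fixes p :: "'a::field poly"
  assumes "0 < degree p"
  shows "\<exists>\<pi>. \<pi> dvd p \<and> irreducible \<pi> \<and> lead_coeff \<pi> = 1"
  using assms
proof (induction "degree p" arbitrary: p rule: less_induct)
  case less
  have "p \<noteq> 0"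
    using less.prems by auto
  then have "\<not> is_unit p"
    using less.prems by (simp add: is_unit_iff_degree)
  show ?case
  proof (cases "irreducible p")
    case True
    define \<pi> where "\<pi> = [:inverse (lead_coeff p):] * p"
    have "is_unit [:inverse (lead_coeff p):]"
      using \<open>p \<noteq> 0\<close> by (simp add: is_unit_const_poly_iff dvd_field_iff)
    then have "irreducible \<pi>" "\<pi> dvd p"
      using True by (simp_all only: \<pi>_def irreducible_mult_unit_left mult_unit_dvd_iff' dvd_refl)
    moreover have "lead_coeff \<pi> = 1"
      using \<open>p \<noteq> 0\<close> by (simp add: \<pi>_def)
    ultimately show ?thesis
      by blast
  next
    case False
    then obtain a c where p: "p = a * c" "\<not> is_unit a" "\<not> is_unit c"
      using \<open>p \<noteq> 0\<close> \<open>\<not> is_unit p\<close> by (auto simp: irreducible_def)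
    then have "a \<noteq> 0" "c \<noteq> 0"
      using \<open>p \<noteq> 0\<close> by auto
    then have "0 < degree a" "0 < degree c"
      using p by (auto simp: is_unit_iff_degree)
    then have "degree a < degree p"
      using p \<open>a \<noteq> 0\<close> \<open>c \<noteq> 0\<close> by (simp add: degree_mult_eq)
    then obtain \<pi> where "\<pi> dvd a" "irreducible \<pi>" "lead_coeff \<pi> = 1"
      using less.hyps \<open>0 < degree a\<close> by blast
    then show ?thesis
      using p(1) by (meson dvd_mult2)
  qed
qed

lemma poly_split_power:
  fixes \<pi> p :: "'a::field poly"
  assumes "0 < degree \<pi>" and "p \<noteq> 0"
  shows "\<exists>l g. p = \<pi> ^ l * g \<and> \<not> \<pi> dvd g"
  using assms(2)
proof (induction "degree p" arbitrary: p rule: less_induct)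
  case less
  show ?case
  proof (cases "\<pi> dvd p")
    case False
    then show ?thesis
      by (intro exI[of _ 0] exI[of _ p]) simp
  next
    case True
    then obtain p' where p: "p = \<pi> * p'"
      by blast
    then have "p' \<noteq> 0" "\<pi> \<noteq> 0"
      using less.prems by auto
    then have "degree p' < degree p"
      using p assms(1) by (simp add: degree_mult_eq)
    then obtain l g where "p' = \<pi> ^ l * g" "\<not> \<pi> dvd g"
      using less.hyps \<open>p' \<noteq> 0\<close> by blast
    then have "p = \<pi> ^ Suc l * g"
      by (simp add: p mult.assoc)
    then show ?thesis
      using \<open>\<not> \<pi> dvd g\<close> by blast
  qed
qed

text \<open>A nonzero element of least degree in the ideal generated by \<open>p\<close> and \<open>q\<close> divides both.\<close>

lemma poly_ideal_gcd_exists: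
  fixes p q :: "'a::field poly"
  assumes "q \<noteq> 0"
  shows "\<exists>s t. s * p + t * q \<noteq> 0 \<and> s * p + t * q dvd p \<and> s * p + t * q dvd q"
proof -
  let ?comb = "\<lambda>h. h \<noteq> 0 \<and> (\<exists>s t. h = s * p + t * q)"
  have "?comb q"
    using assms by (intro conjI exI[of _ 0] exI[of _ 1]) simp_all
  then obtain h where h: "?comb h" and h_min: "\<And>h'. ?comb h' \<Longrightarrow> degree h \<le> degree h'"
    using ex_has_least_nat[of ?comb q degree] by blast
  then obtain s t where st: "h = s * p + t * q"
    by blast
  have dvd_comb: "h dvd x" if "x = a * p + c * q" for x a c
  proof (rule ccontr)
    assume "\<not> h dvd x"
    then have "x mod h \<noteq> 0"
      by (simp add: mod_eq_0_iff_dvd)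
    define k where "k = x div h"
    have "x mod h = x - k * h"
      by (simp add: k_def minus_div_mult_eq_mod)
    also have "\<dots> = (a - k * s) * p + (c - k * t) * q"
      by (simp add: that st algebra_simps)
    finally have "?comb (x mod h)"
      using \<open>x mod h \<noteq> 0\<close> by blast
    then have "degree h \<le> degree (x mod h)"
      by (rule h_min)
    moreover have "degree (x mod h) < degree h"
      using h \<open>x mod h \<noteq> 0\<close> degree_mod_less by blast
    ultimately show False
      by simp
  qed
  have "h dvd p" "h dvd q"
    using dvd_comb[of p 1 0] dvd_comb[of q 0 1] by simp_all
  then show ?thesis
    using h st by blast
qed

lemma poly_bezout_irreducible:
  fixes \<pi> g :: "'a::field poly"
  assumes "irreducible \<pi>" and "\<not> \<pi> dvd g"
  shows "\<exists>a c. a * \<pi> + c * g = 1"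
proof -
  have "g \<noteq> 0"
    using assms(2) by auto
  then obtain s t where d: "s * \<pi> + t * g \<noteq> 0" "s * \<pi> + t * g dvd \<pi>" "s * \<pi> + t * g dvd g"
    using poly_ideal_gcd_exists by blast
  then have "is_unit (s * \<pi> + t * g)"
    using irreducibleD'[OF assms(1) d(2)] assms(2) dvd_trans by blast
  then obtain u where "(s * \<pi> + t * g) * u = 1"
    by (metis dvd_def)
  then have "(u * s) * \<pi> + (u * t) * g = 1"
    by (simp add: algebra_simps)
  then show ?thesis
    by blast
qed

lemma bezout_power:
  fixes x y :: "'a::comm_ring_1"
  assumes "a * x + c * y = 1"
  shows "\<exists>s t. s * x ^ l + t * y = 1"
proof (induction l)
  case 0
  then show ?case
    by (metis add.right_neutral mult_1 mult_zero_left power_0)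
next
  case (Suc l)
  then obtain s t where "s * x ^ l + t * y = 1"
    by blast
  then have "(s * x ^ l + t * y) * (a * x + c * y) = 1"
    using assms by simp
  then have "(s * a) * x ^ Suc l + (s * x ^ l * c + t * a * x + t * c * y) * y = 1"
    by (simp add: algebra_simps)
  then show ?case
    by blast
qed

lemma monic_prime_power_or_bezout_split:
  fixes \<mu> :: "'a::field poly"
  assumes "lead_coeff \<mu> = 1" and "0 < degree \<mu>"
  shows "(\<exists>\<pi> l. 1 \<le> l \<and> lead_coeff \<pi> = 1 \<and> irreducible \<pi> \<and> \<mu> = \<pi> ^ l) \<or>
    (\<exists>f g s t. \<mu> = f * g \<and> 0 < degree f \<and> 0 < degree g \<and> s * f + t * g = 1)"
proof -
  obtain \<pi> where \<pi>: "\<pi> dvd \<mu>" "irreducible \<pi>" "lead_coeff \<pi> = 1"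
    using poly_exists_monic_irreducible_factor[OF assms(2)] by blast
  then have "\<pi> \<noteq> 0" "0 < degree \<pi>"
    by (auto simp: irreducible_def is_unit_iff_degree)
  moreover have "\<mu> \<noteq> 0"
    using assms(1) by auto
  ultimately obtain l g where \<mu>: "\<mu> = \<pi> ^ l * g" and "\<not> \<pi> dvd g"
    using poly_split_power by blast
  have "l \<noteq> 0"
  proof
    assume "l = 0"
    then show False
      using \<mu> \<pi>(1) \<open>\<not> \<pi> dvd g\<close> by simp
  qed
  show ?thesis
  proof (cases "degree g = 0")
    case True
    then have "g = [:lead_coeff g:]"
      by (metis degree_0_id)
    moreover have "lead_coeff g = 1"
      using assms(1) \<pi>(3) by (simp add: \<mu> lead_coeff_mult lead_coeff_power)
    ultimately have "\<mu> = \<pi> ^ l"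
      by (simp add: \<mu> one_pCons)
    then show ?thesis
      using \<open>l \<noteq> 0\<close> \<pi>(2,3) by (intro disjI1 exI[of _ \<pi>] exI[of _ l]) simp
  next
    case False
    obtain s t where "s * \<pi> ^ l + t * g = 1"
      using poly_bezout_irreducible[OF \<pi>(2) \<open>\<not> \<pi> dvd g\<close>] bezout_power by blast
    moreover have "0 < degree (\<pi> ^ l)"
      using \<open>0 < degree \<pi>\<close> \<open>l \<noteq> 0\<close> by (simp add: degree_power_eq \<open>\<pi> \<noteq> 0\<close>)
    ultimately show ?thesis
      using \<mu> False by blast
  qed
qed

section \<open>Splitting along coprime factors\<close>

lemma subspace_matrix_kernel: "vec.subspace {x. (A::'a::field^'n^'m) *v x = 0}"
  by (rule vec.linear_subspace_kernel[OF matrix_vector_mul_linear_gen])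

lemma dim_eq_sum_dim_kernels:
  fixes A B P Q X Y :: "'a::field^'n^'n"
  assumes S: "vec.subspace S" and PQ: "P + Q = mat 1"
    and AP: "A ** P = 0" and BQ: "B ** Q = 0" and "P = X ** B" and "Q = Y ** A"
    and P_S: "\<And>x. x \<in> S \<Longrightarrow> P *v x \<in> S" and Q_S: "\<And>x. x \<in> S \<Longrightarrow> Q *v x \<in> S"
  shows "vec.dim S = vec.dim (S \<inter> {x. A *v x = 0}) + vec.dim (S \<inter> {x. B *v x = 0})"
proof -
  let ?S1 = "S \<inter> {x. A *v x = 0}" and ?S2 = "S \<inter> {x. B *v x = 0}"
  have sub: "vec.subspace ?S1" "vec.subspace ?S2"
    using S subspace_matrix_kernel by (auto intro: vec.subspace_inter)
  have split: "x = P *v x + Q *v x" for x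
    using PQ by (metis matrix_vector_mult_add_rdistrib matrix_vector_mul_lid)
  have sums: "{y + z |y z. y \<in> ?S1 \<and> z \<in> ?S2} = S"
  proof
    show "{y + z |y z. y \<in> ?S1 \<and> z \<in> ?S2} \<subseteq> S"
      using S vec.subspace_add by blast
    show "S \<subseteq> {y + z |y z. y \<in> ?S1 \<and> z \<in> ?S2}"
    proof
      fix x assume "x \<in> S"
      then have "P *v x \<in> ?S1" "Q *v x \<in> ?S2"
        using P_S Q_S AP BQ by (simp_all add: matrix_vector_mul_assoc)
      then show "x \<in> {y + z |y z. y \<in> ?S1 \<and> z \<in> ?S2}"
        using split by blast
    qed
  qed
  have "?S1 \<inter> ?S2 \<subseteq> {0}"
  proof
    fix x assume "x \<in> ?S1 \<inter> ?S2"
    then have "P *v x = 0" "Q *v x = 0"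
      using assms(5,6) by (simp_all flip: matrix_vector_mul_assoc)
    then show "x \<in> {0}"
      using split[of x] by simp
  qed
  then have "vec.dim (?S1 \<inter> ?S2) = 0"
    by (simp only: vec.dim_eq_0)
  moreover have "vec.dim S + vec.dim (?S1 \<inter> ?S2) = vec.dim ?S1 + vec.dim ?S2"
    using vec.dim_sums_Int[OF sub] unfolding sums .
  ultimately show ?thesis
    by linarith
qed

lemma bezout_split_matrices:
  fixes M :: "'a::field^'n^'n"
  assumes fg: "poly_mat (f * g) M = 0" and st: "s * f + t * g = 1"
  shows "poly_mat (t * g) M + poly_mat (s * f) M = mat 1"
    and "poly_mat f M ** poly_mat (t * g) M = 0" and "poly_mat g M ** poly_mat (s * f) M = 0"
    and "poly_mat (t * g) M = poly_mat t M ** poly_mat g M"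
    and "poly_mat (s * f) M = poly_mat s M ** poly_mat f M"
proof -
  show "poly_mat (t * g) M + poly_mat (s * f) M = mat 1"
    using st by (simp flip: poly_mat_add add: add.commute)
  have "poly_mat f M ** poly_mat (t * g) M = poly_mat t M ** poly_mat (f * g) M"
    by (simp flip: poly_mat_mult add: ac_simps)
  then show "poly_mat f M ** poly_mat (t * g) M = 0"
    using fg by simp
  have "poly_mat g M ** poly_mat (s * f) M = poly_mat s M ** poly_mat (f * g) M"
    by (simp flip: poly_mat_mult add: ac_simps)
  then show "poly_mat g M ** poly_mat (s * f) M = 0"
    using fg by simp
qed (simp_all add: poly_mat_mult)

lemma dim_kernels_bezout_split:
  fixes M :: "'a::field^'n^'n"
  assumes "poly_mat (f * g) M = 0" and "s * f + t * g = 1"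
  shows "vec.dim {x. poly_mat f M *v x = 0} + vec.dim {x. poly_mat g M *v x = 0} = CARD('n)"
  using dim_eq_sum_dim_kernels[OF vec.subspace_UNIV bezout_split_matrices[OF assms]]
  by (simp add: card_cart_basis)

section \<open>Extension of scalars\<close>

locale scalar_extension =
  fixes emb :: "'K::field \<Rightarrow> 'L::field" and b :: "'m::finite \<Rightarrow> 'L"
  assumes field_emb: "field_emb emb" and basis: "is_K_basis emb b"
begin

lemma emb_add: "emb (x + y) = emb x + emb y"
  and emb_mult: "emb (x * y) = emb x * emb y"
  and emb_1: "emb 1 = 1"
  using field_emb by (simp_all add: field_emb_def)

lemma emb_0 [simp]: "emb 0 = 0"
  by (metis add.right_neutral add_left_cancel emb_add)

lemma emb_sum: "emb (sum f S) = (\<Sum>i\<in>S. emb (f i))"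
  by (induction S rule: infinite_finite_induct) (auto simp: emb_add)

lemma inj_emb: "inj emb"
proof (rule injI)
  fix x y assume "emb x = emb y"
  then have "emb (x - y) = 0"
    using emb_add[of "x - y" y] by simp
  show "x = y"
  proof (rule ccontr)
    assume "x \<noteq> y"
    then have "emb ((x - y) * inverse (x - y)) = 1"
      by (simp add: emb_1)
    then show False
      using \<open>emb (x - y) = 0\<close> by (simp add: emb_mult)
  qed
qed

lemma coord_expansion: "l = (\<Sum>i\<in>UNIV. emb (coord emb b l $ i) * b i)"
  unfolding coord_def by (rule theI') (use basis in \<open>simp add: is_K_basis_def\<close>)

lemma coord_unique: "l = (\<Sum>i\<in>UNIV. emb (a $ i) * b i) \<Longrightarrow> coord emb b l = a"
  unfolding coord_def by (rule the1_equality) (use basis in \<open>simp_all add: is_K_basis_def\<close>)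

lemma coord_add: "coord emb b (x + y) = coord emb b x + coord emb b y"
  by (rule coord_unique, subst coord_expansion[of x], subst coord_expansion[of y])
    (simp add: emb_add distrib_right sum.distrib)

lemma coord_emb_mult: "coord emb b (emb a * x) = a *s coord emb b x"
  by (rule coord_unique, subst coord_expansion[of x])
    (simp add: emb_mult sum_distrib_left mult.assoc)

lemma coord_0: "coord emb b 0 = 0"
  by (rule coord_unique) simp

lemma coord_sum: "coord emb b (sum f S) = (\<Sum>i\<in>S. coord emb b (f i))"
  by (induction S rule: infinite_finite_induct) (auto simp: coord_0 coord_add)

definition emb_vec :: "'K^'n \<Rightarrow> 'L^'n" where
  "emb_vec u = (\<chi> j. emb (u $ j))"

lemma emb_vec_lincomb: "emb_vec (\<Sum>a\<in>T. r a *s a) = (\<Sum>a\<in>T. emb (r a) *s emb_vec a)"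
  by (simp add: emb_vec_def vec_eq_iff sum_component emb_sum emb_mult)

lemma inj_emb_vec: "inj emb_vec"
  using inj_emb by (auto simp: inj_def emb_vec_def vec_eq_iff)

lemma row_coord_matrix: "row i (coord_matrix emb b c) = (\<chi> j. coord emb b (c $ j) $ i)"
  by (simp add: row_def coord_matrix_def)

lemma row_coord_matrix_lincomb:
  assumes "finite T"
  shows "row i (coord_matrix emb b (\<Sum>k\<in>T. r k *s emb_vec (u k))) =
    (\<Sum>k\<in>T. coord emb b (r k) $ i *s u k)"
  using assms
  by (simp add: row_coord_matrix vec_eq_iff sum_component emb_vec_def coord_sum mult.commute
      coord_emb_mult[simplified mult.commute])

lemma coord_matrix_expansion: "c = (\<Sum>k\<in>UNIV. b k *s emb_vec (row k (coord_matrix emb b c)))"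
  by (subst vec_eq_iff, subst coord_expansion)
    (simp add: sum_component emb_vec_def row_coord_matrix mult.commute)

lemma row_coord_matrix_0 [simp]: "row i (coord_matrix emb b 0) = 0"
  by (simp add: row_coord_matrix coord_0 vec_eq_iff)

lemma rows_coord_matrix_eq_0_iff: "(\<forall>i. row i (coord_matrix emb b c) = 0) \<longleftrightarrow> c = 0"
proof
  assume "\<forall>i. row i (coord_matrix emb b c) = 0"
  then show "c = 0"
    by (subst coord_matrix_expansion) (simp add: emb_vec_def vec_eq_iff)
qed simp

lemma row_coord_matrix_map_matrix:
  "row i (coord_matrix emb b (map_matrix emb A *v c)) = A *v row i (coord_matrix emb b c)"
  by (simp add: row_coord_matrix vec_eq_iff matrix_vector_mult_def coord_sum coord_emb_mult)

lemma map_matrix_add: "map_matrix emb (A + B) = map_matrix emb A + map_matrix emb B"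
  by (simp add: map_matrix_def vec_eq_iff emb_add)

lemma map_matrix_mult: "map_matrix emb (A ** B) = map_matrix emb A ** map_matrix emb B"
  by (simp add: map_matrix_def vec_eq_iff matrix_matrix_mult_def emb_sum emb_mult)

lemma map_matrix_mat: "map_matrix emb (mat a) = mat (emb a)"
  by (simp add: map_matrix_def vec_eq_iff mat_def)

lemma map_matrix_0 [simp]: "map_matrix emb 0 = 0"
  by (simp add: map_matrix_def vec_eq_iff)

text \<open>The \<open>L\<close>-span \<open>U \<otimes> L\<close> of a \<open>K\<close>-subspace \<open>U\<close>, described by the coordinate rows.\<close>

definition scalar_ext :: "('K^'n) set \<Rightarrow> ('L^'n) set" where
  "scalar_ext U = {c. \<forall>i. row i (coord_matrix emb b c) \<in> U}"

lemma scalar_ext_mono: "U \<subseteq> V \<Longrightarrow> scalar_ext U \<subseteq> scalar_ext V"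
  by (auto simp: scalar_ext_def)

lemma scalar_ext_eq_span:
  assumes U: "vec.subspace U"
  shows "scalar_ext U = vec.span (emb_vec ` U)"
proof
  show "scalar_ext U \<subseteq> vec.span (emb_vec ` U)"
  proof
    fix c assume "c \<in> scalar_ext U"
    then have "(\<Sum>k\<in>UNIV. b k *s emb_vec (row k (coord_matrix emb b c))) \<in> vec.span (emb_vec ` U)"
      by (intro vec.span_sum vec.span_scale vec.span_base) (auto simp: scalar_ext_def)
    then show "c \<in> vec.span (emb_vec ` U)"
      by (simp flip: coord_matrix_expansion)
  qed
  show "vec.span (emb_vec ` U) \<subseteq> scalar_ext U"
  proof
    fix c assume "c \<in> vec.span (emb_vec ` U)"
    then obtain t r where t: "finite t" "t \<subseteq> emb_vec ` U" "c = (\<Sum>a\<in>t. r a *s a)"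
      unfolding vec.span_explicit by blast
    then obtain T where T: "T \<subseteq> U" "finite T" "t = emb_vec ` T"
      using finite_subset_image[OF t(1,2)] by blast
    have "inj_on emb_vec T"
      using inj_emb_vec by (rule inj_on_subset) simp
    then have c: "c = (\<Sum>u\<in>T. r (emb_vec u) *s emb_vec u)"
      using t(3) T(3) by (simp add: sum.reindex)
    have "(\<Sum>u\<in>T. coord emb b (r (emb_vec u)) $ i *s u) \<in> U" for i
      using T(1) by (intro vec.subspace_sum[OF U] vec.subspace_scale[OF U]) blast
    then show "c \<in> scalar_ext U"
      using row_coord_matrix_lincomb[OF T(2), of _ "r \<circ> emb_vec" id] by (simp add: scalar_ext_def c)
  qed
qed

lemma scalar_ext_subspace: "vec.subspace U \<Longrightarrow> vec.subspace (scalar_ext U)"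
  by (simp add: scalar_ext_eq_span)

lemma scalar_ext_kernel: "scalar_ext {x. A *v x = 0} = {c. map_matrix emb A *v c = 0}"
  by (auto simp: scalar_ext_def simp flip: row_coord_matrix_map_matrix rows_coord_matrix_eq_0_iff)

lemma Rsupp_subset: "vec.subspace U \<Longrightarrow> c \<in> scalar_ext U \<Longrightarrow> Rsupp emb b c \<subseteq> U"
  unfolding Rsupp_def by (rule vec.span_minimal) (auto simp: scalar_ext_def)

lemma emb_vec_span_subset: "emb_vec ` vec.span B \<subseteq> vec.span (emb_vec ` B)"
proof
  fix y assume "y \<in> emb_vec ` vec.span B"
  then obtain T r where "T \<subseteq> B" "y = emb_vec (\<Sum>a\<in>T. r a *s a)"
    unfolding vec.span_explicit by blast
  moreover have "(\<Sum>a\<in>T. emb (r a) *s emb_vec a) \<in> vec.span (emb_vec ` B)"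
    using \<open>T \<subseteq> B\<close> by (intro vec.span_sum vec.span_scale vec.span_base) blast
  ultimately show "y \<in> vec.span (emb_vec ` B)"
    by (simp add: emb_vec_lincomb)
qed

lemma independent_emb_vec_image:
  assumes B: "vec.independent B"
  shows "vec.independent (emb_vec ` B)"
  unfolding vec.independent_explicit_finite_subsets
proof (intro allI impI ballI)
  fix S w v
  assume S: "S \<subseteq> emb_vec ` B" "finite S" and sum_w: "(\<Sum>v\<in>S. w v *s v) = 0" and "v \<in> S"
  obtain T where T: "T \<subseteq> B" "finite T" "S = emb_vec ` T"
    using finite_subset_image[OF S(2,1)] by blast
  have indep: "\<And>u. (\<Sum>x\<in>T. u x *s x) = 0 \<Longrightarrow> \<forall>x\<in>T. u x = 0"
    using B T(1,2) unfolding vec.independent_explicit_finite_subsets by blast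
  have inj: "inj_on emb_vec T"
    using inj_emb_vec by (rule inj_on_subset) simp
  have "(\<Sum>x\<in>T. w (emb_vec x) *s emb_vec x) = 0"
    using sum_w by (simp add: T(3) sum.reindex[OF inj])
  then have "(\<Sum>x\<in>T. coord emb b (w (emb_vec x)) $ i *s x) = 0" for i
    using row_coord_matrix_lincomb[OF T(2), of i "w \<circ> emb_vec" id] by simp
  then have "coord emb b (w (emb_vec x)) $ i = 0" if "x \<in> T" for x i
    using indep[of "\<lambda>x. coord emb b (w (emb_vec x)) $ i"] that by blast
  then have "w (emb_vec x) = 0" if "x \<in> T" for x
    using that coord_expansion[of "w (emb_vec x)"] by simp
  then show "w v = 0"
    using \<open>v \<in> S\<close> T(3) by blast
qed

lemma dim_scalar_ext:
  assumes U: "vec.subspace U"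
  shows "vec.dim (scalar_ext U) = vec.dim U"
proof -
  obtain B where B: "B \<subseteq> U" "vec.independent B" "U \<subseteq> vec.span B" "card B = vec.dim U"
    by (rule vec.basis_exists)
  have "vec.span (emb_vec ` B) = scalar_ext U"
  proof
    show "vec.span (emb_vec ` B) \<subseteq> scalar_ext U"
      unfolding scalar_ext_eq_span[OF U] using B(1) by (intro vec.span_mono image_mono)
    have "emb_vec ` U \<subseteq> vec.span (emb_vec ` B)"
      using B(3) emb_vec_span_subset by blast
    then show "scalar_ext U \<subseteq> vec.span (emb_vec ` B)"
      unfolding scalar_ext_eq_span[OF U] by (rule vec.span_minimal) simp
  qed
  then have "vec.dim (scalar_ext U) = card (emb_vec ` B)"
    using vec.dim_span_eq_card_independent[OF independent_emb_vec_image[OF B(2)]] by simp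
  also have "\<dots> = vec.dim U"
    using B(4) card_image[OF inj_on_subset[OF inj_emb_vec subset_UNIV[of B]]] by simp
  finally show ?thesis .
qed

section \<open>Rank weights of codes inside an extended subspace\<close>

lemma gen_rank_weight_1_le:
  fixes C :: "('L^'n) set"
  assumes C: "vec.subspace C" and U: "vec.subspace U"
    and c: "c \<in> C" "c \<noteq> 0" "c \<in> scalar_ext U"
  shows "gen_rank_weight emb b 1 C \<le> vec.dim U"
proof -
  define D where "D = vec.span {c}"
  have D: "vec.subspace D" "D \<subseteq> C" "vec.dim D = 1"
    using c C by (auto simp: D_def vec.span_minimal vec.dim_span_eq_card_independent)
  have "D \<subseteq> scalar_ext U"
    unfolding D_def using c(3) scalar_ext_subspace[OF U] by (intro vec.span_minimal) auto
  then have "vec.span (\<Union>d\<in>D. Rsupp emb b d) \<subseteq> U"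
    using Rsupp_subset[OF U] U by (intro vec.span_minimal) auto
  then have "wtR_space emb b D \<le> vec.dim U"
    unfolding wtR_space_def by (rule vec.dim_subset)
  let ?W = "{wtR_space emb b D | D. vec.subspace D \<and> D \<subseteq> C \<and> vec.dim D = 1}"
  have "finite ?W"
    by (rule finite_subset[of _ "{..CARD('n)}"]) (auto simp: wtR_space_def dim_subset_UNIV_cart_gen)
  moreover have "wtR_space emb b D \<in> ?W"
    using D by blast
  ultimately have "Min ?W \<le> wtR_space emb b D"
    by (rule Min_le)
  then show ?thesis
    using \<open>wtR_space emb b D \<le> vec.dim U\<close> unfolding gen_rank_weight_def by simp
qed

text \<open>A subspace \<open>U \<subseteq> V\<close> of codimension \<open>dim D - 1\<close> meets \<open>D\<close> nontrivially after extension
  of scalars.\<close>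

lemma gen_rank_weight_1_singleton_bound:
  fixes C :: "('L^'n) set"
  assumes C: "vec.subspace C" and V: "vec.subspace V" and D: "vec.subspace D"
    and "D \<subseteq> C" and DV: "D \<subseteq> scalar_ext V" and "1 \<le> vec.dim D"
  shows "gen_rank_weight emb b 1 C + vec.dim D \<le> vec.dim V + 1"
proof -
  define k where "k = vec.dim D"
  have "k \<le> vec.dim V"
    using vec.dim_subset[OF DV] dim_scalar_ext[OF V] by (simp add: k_def)
  obtain B where B: "B \<subseteq> V" "vec.independent B" "card B = vec.dim V"
    by (rule vec.basis_exists)
  have "vec.dim V - k + 1 \<le> card B"
    using B(3) \<open>k \<le> vec.dim V\<close> \<open>1 \<le> vec.dim D\<close> k_def by linarith
  then obtain B' where B': "B' \<subseteq> B" "card B' = vec.dim V - k + 1"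
    by (rule obtain_subset_with_card_n)
  define U where "U = vec.span B'"
  have U: "vec.subspace U"
    by (simp add: U_def)
  have "U \<subseteq> V"
    unfolding U_def using B(1) B'(1) V by (intro vec.span_minimal) auto
  have dim_U: "vec.dim U = vec.dim V - k + 1"
    unfolding U_def
    using vec.dim_span_eq_card_independent[OF vec.independent_mono[OF B(2) B'(1)]] B'(2) by simp
  have "{x + y |x y. x \<in> D \<and> y \<in> scalar_ext U} \<subseteq> scalar_ext V"
  proof safe
    fix x y assume "x \<in> D" "y \<in> scalar_ext U"
    then show "x + y \<in> scalar_ext V"
      using DV scalar_ext_mono[OF \<open>U \<subseteq> V\<close>]
      by (intro vec.subspace_add[OF scalar_ext_subspace[OF V]]) auto
  qed
  then have "vec.dim {x + y |x y. x \<in> D \<and> y \<in> scalar_ext U} \<le> vec.dim (scalar_ext V)"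
    by (rule vec.dim_subset)
  then have "vec.dim {x + y |x y. x \<in> D \<and> y \<in> scalar_ext U} \<le> vec.dim V"
    by (simp only: dim_scalar_ext[OF V])
  then have "vec.dim (D \<inter> scalar_ext U) \<noteq> 0"
    using vec.dim_sums_Int[OF D scalar_ext_subspace[OF U]] dim_scalar_ext[OF U] dim_U
      \<open>k \<le> vec.dim V\<close> k_def by linarith
  then obtain c where "c \<in> D" "c \<in> scalar_ext U" "c \<noteq> 0"
    unfolding vec.dim_eq_0 by auto
  then have "gen_rank_weight emb b 1 C \<le> vec.dim U"
    using gen_rank_weight_1_le[OF C U] \<open>D \<subseteq> C\<close> by blast
  then show ?thesis
    using dim_U \<open>k \<le> vec.dim V\<close> k_def by linarith
qed

lemma MRD_code_not_split:
  fixes C :: "('L^'n) set"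
  assumes C: "vec.subspace C" "C \<noteq> {0}" "C \<noteq> UNIV"
    and MRD: "gen_rank_weight emb b 1 C = CARD('n) - vec.dim C + 1"
    and V: "vec.subspace V1" "vec.subspace V2" "V1 \<noteq> {0}" "V2 \<noteq> {0}"
    and dim_V: "vec.dim V1 + vec.dim V2 = CARD('n)"
    and dim_C: "vec.dim C = vec.dim (C \<inter> scalar_ext V1) + vec.dim (C \<inter> scalar_ext V2)"
  shows False
proof -
  let ?C1 = "C \<inter> scalar_ext V1" and ?C2 = "C \<inter> scalar_ext V2"
  have dims_V: "1 \<le> vec.dim V1" "1 \<le> vec.dim V2"
    using V by (auto simp: vec.dim_eq_0 vec.subspace_0 Suc_le_eq)
  have "vec.dim ?C1 \<le> vec.dim V1" "vec.dim ?C2 \<le> vec.dim V2"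
    using vec.dim_subset[of ?C1 "scalar_ext V1"] vec.dim_subset[of ?C2 "scalar_ext V2"]
      dim_scalar_ext[OF V(1)] dim_scalar_ext[OF V(2)] by simp_all
  have "1 \<le> vec.dim C"
    using C(1,2) by (auto simp: vec.dim_eq_0 vec.subspace_0 Suc_le_eq)
  have "vec.dim C \<noteq> CARD('n)"
  proof
    assume "vec.dim C = CARD('n)"
    then have "C = UNIV"
      using vec.subspace_dim_equal[OF C(1) vec.subspace_UNIV] by (simp add: card_cart_basis)
    then show False
      using C(3) by simp
  qed
  then have "vec.dim C < CARD('n)"
    using dim_subset_UNIV_cart_gen[of C] by simp
  have bound: "gen_rank_weight emb b 1 C + vec.dim (C \<inter> scalar_ext V) \<le> vec.dim V + 1"
    if "vec.subspace V" "1 \<le> vec.dim (C \<inter> scalar_ext V)" for V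
    using that C(1) by (intro gen_rank_weight_1_singleton_bound)
      (auto intro: vec.subspace_inter scalar_ext_subspace)
  show False
  proof (cases "1 \<le> vec.dim ?C1")
    case True
    with bound[OF V(1)] have "1 \<le> vec.dim ?C2"
      using MRD dim_V dim_C dims_V \<open>vec.dim ?C2 \<le> vec.dim V2\<close> \<open>vec.dim C < CARD('n)\<close>
      by linarith
    then show False
      using True bound[OF V(1)] bound[OF V(2)] MRD dim_V dim_C \<open>vec.dim C < CARD('n)\<close>
      by linarith
  next
    case False
    with bound[OF V(2)] show False
      using MRD dim_V dim_C dims_V \<open>vec.dim ?C1 \<le> vec.dim V1\<close> \<open>1 \<le> vec.dim C\<close>
      by linarith
  qed
qed

lemma M_code_poly_mat_closed:
  assumes M: "is_M_code emb M C" and "c \<in> C"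
  shows "map_matrix emb (poly_mat p M) *v c \<in> C"
  using \<open>c \<in> C\<close>
proof (induction p arbitrary: c)
  case 0
  then show ?case
    using M by (simp add: is_M_code_def vec.subspace_0)
next
  case (pCons a p)
  have C: "vec.subspace C"
    using M by (simp add: is_M_code_def)
  have "map_matrix emb (poly_mat (pCons a p) M) *v c =
      emb a *s c + map_matrix emb M *v (map_matrix emb (poly_mat p M) *v c)"
    by (simp add: poly_mat_pCons map_matrix_add map_matrix_mult map_matrix_mat
        mat_matrix_vector_mult matrix_vector_mult_add_rdistrib matrix_vector_mul_assoc)
  also have "\<dots> \<in> C"
    using pCons M C by (auto simp: is_M_code_def intro!: vec.subspace_add vec.subspace_scale)
  finally show ?case .
qed

lemma dim_M_code_bezout_split:
  assumes M: "is_M_code emb M C" and fg: "poly_mat (f * g) M = 0" and st: "s * f + t * g = 1"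
  shows "vec.dim C = vec.dim (C \<inter> scalar_ext {x. poly_mat f M *v x = 0}) +
      vec.dim (C \<inter> scalar_ext {x. poly_mat g M *v x = 0})"
proof -
  let ?F = "\<lambda>p. map_matrix emb (poly_mat p M)"
  note split = bezout_split_matrices[OF fg st]
  have C: "vec.subspace C"
    using M by (simp add: is_M_code_def)
  have "vec.dim C = vec.dim (C \<inter> {c. ?F f *v c = 0}) + vec.dim (C \<inter> {c. ?F g *v c = 0})"
  proof (rule dim_eq_sum_dim_kernels[OF C, where P = "?F (t * g)" and Q = "?F (s * f)"
        and X = "?F t" and Y = "?F s"])
    show "?F (t * g) + ?F (s * f) = mat 1"
      using split(1) by (simp flip: map_matrix_add add: map_matrix_mat emb_1)
    show "?F f ** ?F (t * g) = 0" "?F g ** ?F (s * f) = 0"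
      using split(2,3) by (simp_all flip: map_matrix_mult)
    show "?F (t * g) = ?F t ** ?F g" "?F (s * f) = ?F s ** ?F f"
      using split(4,5) by (simp_all add: map_matrix_mult)
  qed (simp_all add: M_code_poly_mat_closed[OF M])
  then show ?thesis
    by (simp only: scalar_ext_kernel)
qed

end

theorem theorem3:
  fixes emb :: "'K::field \<Rightarrow> 'L::field"
    and b :: "'m::finite \<Rightarrow> 'L"
    and M :: "'K^'n^'n"
    and C :: "('L^'n) set"
  assumes "field_emb emb"
    and "is_K_basis emb b"
    and "CARD('n) \<le> CARD('m)"
    and "is_M_code emb M C"
    and "C \<noteq> {0}" and "C \<noteq> UNIV"
    and "gen_rank_weight emb b 1 C = CARD('n) - vec.dim C + 1"
  shows "\<exists>\<pi> (l::nat). l \<ge> 1 \<and> lead_coeff \<pi> = 1 \<and> irreducible \<pi> \<and> min_poly_mat M = \<pi> ^ l"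
proof -
  interpret scalar_extension emb b
    using assms(1,2) by unfold_locales
  have C: "vec.subspace C"
    using assms(4) by (simp add: is_M_code_def)
  from monic_prime_power_or_bezout_split[OF monic_min_poly_mat[of M] degree_min_poly_mat_pos[of M]]
  show ?thesis
  proof
    assume "\<exists>\<pi> l. 1 \<le> l \<and> lead_coeff \<pi> = 1 \<and> irreducible \<pi> \<and> min_poly_mat M = \<pi> ^ l"
    then show ?thesis .
  next
    assume "\<exists>f g s t. min_poly_mat M = f * g \<and> 0 < degree f \<and> 0 < degree g \<and> s * f + t * g = 1"
    then obtain f g s t where fg: "min_poly_mat M = f * g" and "0 < degree f" "0 < degree g"
      and st: "s * f + t * g = 1"
      by blast
    have fg_M: "poly_mat (f * g) M = 0"
      using poly_mat_min_poly_mat[of M] by (simp add: fg)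
    have "{x. poly_mat f M *v x = 0} \<noteq> {0}"
      using fg \<open>0 < degree f\<close> by (rule min_poly_mat_factor_kernel_nontrivial)
    moreover have "{x. poly_mat g M *v x = 0} \<noteq> {0}"
      using fg \<open>0 < degree g\<close>
      by (intro min_poly_mat_factor_kernel_nontrivial[of M g f]) (simp_all add: mult.commute)
    ultimately have False
      using MRD_code_not_split[OF C assms(5-7) subspace_matrix_kernel subspace_matrix_kernel _ _
          dim_kernels_bezout_split[OF fg_M st] dim_M_code_bezout_split[OF assms(4) fg_M st]]
      by blast
    then show ?thesis ..
  qed
qed

end
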